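(* Let $z>0$, $\zeta=(z/2)^{1/3}$, and $V_0=\frac{5}{36z^2}-\frac{1}{4(z/2)^{2/3}}=\frac{5-36\zeta^4}{144\zeta^6}$. Let $a,c$ be nonzero constants and $A_{m,k}$ ($m,k\ge0$) the coefficients defined below. For $n\in\mathbb Z\setminus\{0\}$ with $\delta=\operatorname{sgn}(n)$ set $$\psi_n=\zeta^{1/2}e^{-\frac32\delta\zeta^2}\sum_{k=0}^{2|n|-2}A_{|n|-1,k}(\delta\zeta^2)^k,$$ and $\psi_0=0$. Then for all $n\ne0$, $$\frac{\mathrm d^2\psi_n}{\mathrm dz^2}+V_0\psi_n=-\delta\,a\,\psi_{n-\delta}.$$
   Context: The coefficients $A_{m,k}$, $m,k\in\mathbb Z_{\ge0}$ (set to $0$ if an index is negative), are determined by $A_{0,0}=c$, $A_{0,k}=0$ ($k\ge1$), and for $m\ge1$: $A_{m,0}=0$, $A_{m,2m}=\big(\tfrac{3a}{2}\big)^m\frac{c}{m!}$, $A_{m,k}=\frac{3a}{k}A_{m-1,k-2}+\frac{k+1}{3}A_{m,k+1}$ for $k\ge2$, and $A_{m,1}=\frac23A_{m,2}$ (with these conditions $A_{m,k}=0$ for $k>2m$). *)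

theory Defs
  imports "HOL-Analysis.Analysis"
begin

function Acoef :: "real \<Rightarrow> real \<Rightarrow> nat \<Rightarrow> nat \<Rightarrow> real" where
  "Acoef a c m k =
     (if m = 0 then (if k = 0 then c else 0)
      else if k = 0 then 0
      else if k > 2 * m then 0
      else if k = 2 * m then (3 * a / 2) ^ m * c / fact m
      else if k = 1 then 2 / 3 * Acoef a c m 2
      else 3 * a / real k * Acoef a c (m - 1) (k - 2)
           + (real k + 1) / 3 * Acoef a c m (k + 1))"
  by pat_completeness auto
termination
  by (relation "measures [\<lambda>(a, c, m, k). m, \<lambda>(a, c, m, k). 2 * m + 1 - k]") auto

definition zeta :: "real \<Rightarrow> real" where
  "zeta z = (z / 2) powr (1 / 3)"

definition V0 :: "real \<Rightarrow> real" where
  "V0 z = 5 / (36 * z ^ 2) - 1 / (4 * (z / 2) powr (2 / 3))"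

definition psi :: "real \<Rightarrow> real \<Rightarrow> int \<Rightarrow> real \<Rightarrow> real" where
  "psi a c n z =
     (if n = 0 then 0
      else (let \<delta> = real_of_int (sgn n); m = nat \<bar>n\<bar> - 1 in
            sqrt (zeta z) * exp (- 3 / 2 * \<delta> * (zeta z) ^ 2) *
            (\<Sum>k = 0..2 * m. Acoef a c m k * (\<delta> * (zeta z) ^ 2) ^ k)))"

end

theory Submission
  imports Defs "HOL-Computational_Algebra.Polynomial"
begin

text \<open>Let s = t/2, so that \<zeta>^2 = s^(2/3), and put w = \<delta> \<zeta>^2.  Then \<psi>_n(t) = s^(1/6) G(w) with
  G(w) = exp(-3w/2) P_m(w), where m = |n| - 1 and P_m is the generating polynomial of the
  coefficients A_{m,k}.  The recursion for the coefficients is equivalent to the polynomial identity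
  P_m'' - 3 P_m' = -9 a X P_{m-1}, i.e. G'' - 9/4 G = -9 a w exp(-3w/2) P_{m-1}(w).
  The change of variables G \<mapsto> s^(1/6) G(\<delta> s^(2/3)) is a Liouville transformation turning
  G'' - 9/4 G into 9 s^(1/2) (\<psi>'' + V_0 \<psi>), and the right-hand side into -9 \<delta> a s^(1/2) \<psi>_{n-\<delta>}.\<close>

declare Acoef.simps[simp del]

lemma Acoef_0: "Acoef a c 0 k = (if k = 0 then c else 0)"
  by (subst Acoef.simps) simp

lemma Acoef_eq_0_above: "2 * m < k \<Longrightarrow> Acoef a c m k = 0"
  by (subst Acoef.simps) auto

lemma Acoef_top: "Acoef a c m (2 * m) = (3 * a / 2) ^ m * c / fact m"
  by (subst Acoef.simps) auto

lemma Acoef_1: "0 < m \<Longrightarrow> Acoef a c m 1 = 2 / 3 * Acoef a c m 2"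
  by (subst Acoef.simps) auto

lemma Acoef_rec:
  "0 < m \<Longrightarrow> 2 \<le> k \<Longrightarrow> k < 2 * m \<Longrightarrow>
   Acoef a c m k = 3 * a / real k * Acoef a c (m - 1) (k - 2) + (real k + 1) / 3 * Acoef a c m (k + 1)"
  by (subst Acoef.simps) auto

lemma Acoef_top_Suc: "Acoef a c (Suc m) (2 * Suc m) = 3 * a / (2 * real (Suc m)) * Acoef a c m (2 * m)"
  unfolding Acoef_top by (simp add: field_simps)

definition Apoly :: "real \<Rightarrow> real \<Rightarrow> nat \<Rightarrow> real poly" where
  "Apoly a c m = (\<Sum>k = 0..2 * m. monom (Acoef a c m k) k)"

lemma coeff_Apoly [simp]: "coeff (Apoly a c m) k = Acoef a c m k"
  using Acoef_eq_0_above[of m k a c] by (simp add: Apoly_def coeff_sum)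

lemma poly_Apoly: "poly (Apoly a c m) w = (\<Sum>k = 0..2 * m. Acoef a c m k * w ^ k)"
  by (simp add: Apoly_def poly_sum poly_monom)

lemma pderiv_Apoly_0: "pderiv (Apoly a c 0) = 0"
  by (simp add: Apoly_def Acoef_0 monom_0)

lemma Acoef_ode_coeff:
  assumes "0 < m"
  shows "real (k + 2) * real (k + 1) * Acoef a c m (k + 2) - 3 * real (k + 1) * Acoef a c m (k + 1)
         = -9 * a * coeff (pCons 0 (Apoly a c (m - 1))) k"
proof (cases k)
  case 0
  then show ?thesis using Acoef_1[OF assms, of a c] by (simp add: numeral_2_eq_2)
next
  case (Suc j)
  consider "k + 1 < 2 * m" | "k + 1 = 2 * m" | "2 * m < k + 1" by linarith
  then show ?thesis
  proof cases
    case 1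
    then have "Acoef a c m (k + 1) = 3 * a / real (k + 1) * Acoef a c (m - 1) j
                 + (real (k + 1) + 1) / 3 * Acoef a c m (k + 2)"
      using Acoef_rec[OF assms, of "k + 1"] Suc by simp
    then show ?thesis using Suc by (simp add: field_simps)
  next
    case 2
    then obtain p where m: "m = Suc p" and j: "j = 2 * p"
      using assms Suc by (cases m) auto
    show ?thesis
      using Acoef_top_Suc[of a c p] Acoef_eq_0_above[of m "k + 2" a c] 2 Suc m j
      by (simp add: field_simps)
  next
    case 3
    then show ?thesis using Acoef_eq_0_above assms Suc by simp
  qed
qed

lemma Apoly_ode:
  assumes "0 < m"
  shows "pderiv (pderiv (Apoly a c m)) - smult 3 (pderiv (Apoly a c m))
         = smult (-9 * a) (pCons 0 (Apoly a c (m - 1)))"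
proof (rule poly_eqI)
  fix k
  show "coeff (pderiv (pderiv (Apoly a c m)) - smult 3 (pderiv (Apoly a c m))) k
        = coeff (smult (-9 * a) (pCons 0 (Apoly a c (m - 1)))) k"
    using Acoef_ode_coeff[OF assms, of k a c]
    by (cases k) (simp_all add: coeff_pderiv algebra_simps)
qed

lemma has_real_derivative_exp_poly:
  "((\<lambda>w. exp (l * w) * poly p w) has_real_derivative exp (l * w) * poly (pderiv p + smult l p) w) (at w)"
  by (auto intro!: derivative_eq_intros simp: algebra_simps)

lemma has_real_derivative_half_powr:
  assumes "0 < t"
  shows "((\<lambda>t. (t / 2) powr r) has_real_derivative r / 2 * (t / 2) powr (r - 1)) (at t)"
  using assms by (auto intro!: derivative_eq_intros)

lemma has_real_derivative_liouville:
  assumes G: "\<And>w. (G has_real_derivative G1 w) (at w)" and t: "0 < t"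
  shows "((\<lambda>t. (t / 2) powr (1 / 6) * G (d * (t / 2) powr (2 / 3))) has_real_derivative
            (t / 2) powr (-5 / 6) / 12 * G (d * (t / 2) powr (2 / 3))
          + d / 3 * (t / 2) powr (-1 / 6) * G1 (d * (t / 2) powr (2 / 3))) (at t)"
proof -
  have "(t / 2) powr (1 / 6) * (t / 2) powr (2 / 3 - 1) = (t / 2) powr (-1 / 6)"
    using t by (simp add: powr_add[symmetric])
  then show ?thesis
    by (auto intro!: DERIV_cong[OF DERIV_mult[OF has_real_derivative_half_powr[OF t]
          DERIV_chain2[OF G DERIV_cmult[OF has_real_derivative_half_powr[OF t]]]]]
        simp: algebra_simps)
qed

lemma has_real_derivative_liouville_second:
  assumes G: "\<And>w. (G has_real_derivative G1 w) (at w)"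
    and G1: "\<And>w. (G1 has_real_derivative G2 w) (at w)"
    and d: "d\<^sup>2 = 1" and t: "0 < t"
  defines "w \<equiv> d * (t / 2) powr (2 / 3)"
  shows "((\<lambda>t. (t / 2) powr (-5 / 6) / 12 * G (d * (t / 2) powr (2 / 3))
              + d / 3 * (t / 2) powr (-1 / 6) * G1 (d * (t / 2) powr (2 / 3))) has_real_derivative
            - V0 t * ((t / 2) powr (1 / 6) * G w) + (t / 2) powr (-1 / 2) * (G2 w / 9 - G w / 4)) (at t)"
proof -
  define s where "s = t / 2"
  have s: "0 < s" using t by (simp add: s_def)
  \<comment> \<open>in terms of u = s^(1/6) every power of s below is an integral power of u\<close>
  define u where "u = s powr (1 / 6)"
  have u: "0 < u" "s = u ^ 6" using s by (simp_all add: u_def powr_powr powr_realpow[symmetric])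
  have pos: "s powr (real k / 6) = u ^ k" for k
    using s by (simp add: u_def powr_powr powr_realpow[symmetric])
  have neg: "s powr (- real k / 6) = inverse (u ^ k)" for k
    using pos[of k] by (simp add: powr_minus)
  have dpowr: "((\<lambda>t. (t / 2) powr r) has_real_derivative r / 2 * s powr (r - 1)) (at t)" for r
    unfolding s_def by (rule has_real_derivative_half_powr[OF t])
  have dw: "((\<lambda>t. d * (t / 2) powr (2 / 3)) has_real_derivative d * (1 / 3 * s powr (-1 / 3))) (at t)"
    using DERIV_cmult[OF dpowr[of "2 / 3"], of d] by simp
  have D: "((\<lambda>t. (t / 2) powr (-5 / 6) / 12 * G (d * (t / 2) powr (2 / 3))
              + d / 3 * (t / 2) powr (-1 / 6) * G1 (d * (t / 2) powr (2 / 3))) has_real_derivative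
          (-5 / 12 * s powr (-11 / 6)) / 12 * G w
          + s powr (-5 / 6) / 12 * (G1 w * (d * (1 / 3 * s powr (-1 / 3))))
          + d / 3 * (-1 / 12 * s powr (-7 / 6)) * G1 w
          + d / 3 * s powr (-1 / 6) * (G2 w * (d * (1 / 3 * s powr (-1 / 3))))) (at t)"
    unfolding w_def s_def
    by (rule DERIV_cong[OF DERIV_add[OF
          DERIV_mult[OF DERIV_cdivide[OF dpowr[of "-5 / 6"]] DERIV_chain2[OF G dw]]
          DERIV_mult[OF DERIV_cmult[OF dpowr[of "-1 / 6"]] DERIV_chain2[OF G1 dw]]]])
      (simp add: s_def algebra_simps)
  have pw: "s powr (-11 / 6) = inverse (u ^ 11)" "s powr (-7 / 6) = inverse (u ^ 7)"
    "s powr (-5 / 6) = inverse (u ^ 5)" "s powr (-1 / 2) = inverse (u ^ 3)"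
    "s powr (-1 / 3) = inverse (u ^ 2)" "s powr (-1 / 6) = inverse u" "s powr (2 / 3) = u ^ 4"
    "s powr (1 / 6) = u"
    using neg[of 11] neg[of 7] neg[of 5] neg[of 3] neg[of 2] neg[of 1] pos[of 4] pos[of 1] by simp_all
  have dd: "d * (d * x) = x" for x
    using d by (simp add: power2_eq_square mult.assoc[symmetric])
  have t_u: "t = 2 * u ^ 6" using u by (simp add: s_def)
  show ?thesis
    unfolding V0_def s_def[symmetric]
    by (rule DERIV_cong[OF D]) (unfold pw t_u, use u(1) in \<open>simp add: dd field_simps\<close>, algebra)
qed

lemma liouville_transform:
  assumes G: "\<And>w. (G has_real_derivative G1 w) (at w)"
    and G1: "\<And>w. (G1 has_real_derivative G2 w) (at w)"
    and d: "d\<^sup>2 = 1"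
    and f: "\<And>t. 0 < t \<Longrightarrow> f t = (t / 2) powr (1 / 6) * G (d * (t / 2) powr (2 / 3))"
    and t: "0 < t"
  defines "w \<equiv> d * (t / 2) powr (2 / 3)"
  shows "f differentiable (at t)"
    and "(deriv f has_real_derivative - V0 t * f t + (t / 2) powr (-1 / 2) * (G2 w / 9 - G w / 4)) (at t)"
proof -
  define f' where "f' t = (t / 2) powr (-5 / 6) / 12 * G (d * (t / 2) powr (2 / 3))
    + d / 3 * (t / 2) powr (-1 / 6) * G1 (d * (t / 2) powr (2 / 3))" for t
  have df: "(f has_real_derivative f' x) (at x)" if x: "0 < x" for x
    unfolding f'_def
    by (rule has_field_derivative_transform_within_open[OF has_real_derivative_liouville[OF G x],
          where S = "{0<..}"]) (use x f in auto)
  then show "f differentiable (at t)"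
    using t real_differentiable_def by blast
  have deriv_f: "deriv f x = f' x" if "0 < x" for x
    using DERIV_imp_deriv[OF df[OF that]] .
  show "(deriv f has_real_derivative - V0 t * f t + (t / 2) powr (-1 / 2) * (G2 w / 9 - G w / 4)) (at t)"
    unfolding f[OF t] w_def
    by (rule has_field_derivative_transform_within_open[OF has_real_derivative_liouville_second[OF G G1 d t],
          where S = "{0<..}"]) (auto simp: t deriv_f f'_def)
qed

lemma psi_eq_exp_poly:
  assumes "n \<noteq> 0" "0 < t"
  shows "psi a c n t = (t / 2) powr (1 / 6) *
    (exp (-3 / 2 * (of_int (sgn n) * (t / 2) powr (2 / 3)))
       * poly (Apoly a c (nat \<bar>n\<bar> - 1)) (of_int (sgn n) * (t / 2) powr (2 / 3)))"
proof -
  have "sqrt (zeta t) = (t / 2) powr (1 / 6)" "zeta t ^ 2 = (t / 2) powr (2 / 3)"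
    using assms by (simp_all add: zeta_def powr_half_sqrt[symmetric] powr_powr powr_power)
  then show ?thesis
    using assms by (simp add: psi_def Let_def poly_Apoly algebra_simps)
qed

lemma psi_pred_eq:
  fixes a c :: real
  assumes n: "n \<noteq> 0" and t: "0 < t"
  defines "w \<equiv> of_int (sgn n) * (t / 2) powr (2 / 3)" and "P \<equiv> Apoly a c (nat \<bar>n\<bar> - 1)"
  shows "(t / 2) powr (-1 / 2) * exp (-3 / 2 * w) * poly (pderiv (pderiv P) - smult 3 (pderiv P)) w / 9
         = - of_int (sgn n) * a * psi a c (n - sgn n) t"
proof (cases "nat \<bar>n\<bar> - 1 = 0")
  case True
  then have "n - sgn n = 0" using n by (auto simp: sgn_if split: if_splits)
  then show ?thesis using True by (simp add: P_def pderiv_Apoly_0 psi_def)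
next
  case False
  have "n - sgn n \<noteq> 0" and "sgn (n - sgn n) = sgn n" and "nat \<bar>n - sgn n\<bar> - 1 = nat \<bar>n\<bar> - 1 - 1"
    using False n by (auto simp: sgn_if)
  then have pred: "psi a c (n - sgn n) t
      = (t / 2) powr (1 / 6) * (exp (-3 / 2 * w) * poly (Apoly a c (nat \<bar>n\<bar> - 1 - 1)) w)"
    using psi_eq_exp_poly[OF _ t, of "n - sgn n"] by (simp add: w_def)
  have "pderiv (pderiv P) - smult 3 (pderiv P)
      = smult (-9 * a) (pCons 0 (Apoly a c (nat \<bar>n\<bar> - 1 - 1)))"
    using Apoly_ode False by (simp add: P_def)
  moreover have "(t / 2) powr (-1 / 2) * (t / 2) powr (2 / 3) = (t / 2) powr (1 / 6)"
    using t by (simp add: powr_add[symmetric])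
  ultimately show ?thesis
    unfolding pred by (simp add: w_def algebra_simps)
qed

theorem mainTheorem11:
  fixes a c :: real and n :: int and z :: real
  assumes "a \<noteq> 0" and "c \<noteq> 0" and "n \<noteq> 0" and "z > 0"
  shows "(\<forall>t>0. psi a c n differentiable (at t)) \<and>
         (deriv (psi a c n) has_real_derivative
            (- V0 z * psi a c n z - real_of_int (sgn n) * a * psi a c (n - sgn n) z)) (at z)"
proof -
  define d where "d = real_of_int (sgn n)"
  define P where "P = Apoly a c (nat \<bar>n\<bar> - 1)"
  define G where "G w = exp (-3 / 2 * w) * poly P w" for w
  define G1 where "G1 w = exp (-3 / 2 * w) * poly (pderiv P + smult (-3 / 2) P) w" for w
  define G2 where "G2 w = exp (-3 / 2 * w) *
    (poly (pderiv (pderiv P) - smult 3 (pderiv P)) w + 9 / 4 * poly P w)" for w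
  have dG: "(G has_real_derivative G1 w) (at w)" for w
    unfolding G_def[abs_def] G1_def by (rule has_real_derivative_exp_poly)
  have dG1: "(G1 has_real_derivative G2 w) (at w)" for w
    unfolding G1_def[abs_def] G2_def
    by (rule DERIV_cong[OF has_real_derivative_exp_poly])
      (simp add: pderiv_add pderiv_diff pderiv_smult algebra_simps)
  have d: "d\<^sup>2 = 1"
    using assms(3) by (simp add: d_def sgn_if)
  have psi: "psi a c n t = (t / 2) powr (1 / 6) * G (d * (t / 2) powr (2 / 3))" if "0 < t" for t
    using psi_eq_exp_poly[OF assms(3) that] by (simp add: G_def P_def d_def)
  define w where "w = d * (z / 2) powr (2 / 3)"
  have "(z / 2) powr (-1 / 2) * (G2 w / 9 - G w / 4)
        = (z / 2) powr (-1 / 2) * exp (-3 / 2 * w) * poly (pderiv (pderiv P) - smult 3 (pderiv P)) w / 9"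
    by (simp add: G_def G2_def field_simps)
  also have "\<dots> = - d * a * psi a c (n - sgn n) z"
    using psi_pred_eq[OF assms(3,4), of a c] by (simp add: w_def P_def d_def)
  finally have pred: "(z / 2) powr (-1 / 2) * (G2 w / 9 - G w / 4) = - d * a * psi a c (n - sgn n) z" .
  have "(deriv (psi a c n) has_real_derivative
      - V0 z * psi a c n z + (z / 2) powr (-1 / 2) * (G2 w / 9 - G w / 4)) (at z)"
    using liouville_transform(2)[OF dG dG1 d psi assms(4)] unfolding w_def .
  then show ?thesis
    using liouville_transform(1)[OF dG dG1 d psi] unfolding pred d_def by simp
qed

end
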